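(* Let $\mathcal{A}:\mathbb{R}^{S^K}\to\mathbb{R}^{m_1\times m_{K+1}}$ be the lifting operator of linear maps $M_1,\dots,M_K$ and let $\mathfrak{M}$ be a family of supports, as described in the context. If $\ker\mathcal{A}\cap \mathbb{T}_{\mathcal{S}\cup\mathcal{S}'}=\{0\}$ for all $\mathcal{S},\mathcal{S}'\in\mathfrak{M}$, then $\mathcal{A}$ satisfies the Deep-$\mathfrak{M}$-Null Space Property with constants $(\gamma,\rho)=(1,+\infty)$.
   Context: Let $K,S\ge 1$ and $m_1,\dots,m_{K+1}$ be positive integers, $\mathbb{N}_S=\{1,\dots,S\}$, and for $k=1,\dots,K$ let $M_k:\mathbb{R}^S\to\mathbb{R}^{m_k\times m_{k+1}}$ be linear. Parameters are $\mathbf{h}=(\mathbf{h}_1,\dots,\mathbf{h}_K)\in\mathbb{R}^{S\times K}$ with $\mathbf{h}_k\in\mathbb{R}^S$ having entries $\mathbf{h}_{k,i}$. $\mathbb{R}^{S^K}$ denotes the space of real tensors of order $K$ with all axes of size $S$, indexed by multi-indices $\mathbf{i}=(\mathbf{i}_1,\dots,\mathbf{i}_K)\in\mathbb{N}_S^K$, with Euclidean norm $\|\cdot\|$. The Segre embedding is $P:\mathbb{R}^{S\times K}\to\mathbb{R}^{S^K}$, $P(\mathbf{h})_{\mathbf{i}}=\mathbf{h}_{1,\mathbf{i}_1}\cdots\mathbf{h}_{K,\mathbf{i}_K}$. The lifting operator $\mathcal{A}$ is the unique linear map $\mathbb{R}^{S^K}\to\mathbb{R}^{m_1\times m_{K+1}}$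 with $\mathcal{A}P(\mathbf{h})=M_1(\mathbf{h}_1)\cdots M_K(\mathbf{h}_K)$ for all $\mathbf{h}$; matrices carry the Frobenius norm. A support is $\mathcal{S}=(\mathcal{S}_1,\dots,\mathcal{S}_K)$ with $\mathcal{S}_k\subset\mathbb{N}_S$; unions are componentwise, $(\mathcal{S}\cup\mathcal{S}')_k=\mathcal{S}_k\cup\mathcal{S}'_k$; for a multi-index, $\mathbf{i}\in\mathcal{S}$ means $\mathbf{i}_k\in\mathcal{S}_k$ for all $k$. Put $\mathbb{R}^{S\times K}_{\mathcal{S}}=\{\mathbf{h}:\mathbf{h}_{k,i}=0 \text{ whenever } i\notin\mathcal{S}_k\}$ and $\mathbb{T}_{\mathcal{S}}=\{T\in\mathbb{R}^{S^K}: T_{\mathbf{i}}=0\text{ whenever }\mathbf{i}\notin\mathcal{S}\}$. $P_{\mathcal{S}}$ is the orthogonal projection onto $\mathbb{T}_{\mathcal{S}}$ (it keeps the entries with $\mathbf{i}\in\mathcal{S}$ and zeroes the others), and $\mathcal{A}_{\mathcal{S}}=\mathcal{A}P_{\mathcal{S}}$. $\mathfrak{M}$ is a given finite family of supports. Deep-$\mathfrak{M}$-Null Space Property: for $\gamma\ge1$ and $\rho>0$ (possibly $\rho=+\infty$), $\mathcal{A}$ satisfies it with constants $(\gamma,\rho)$ iff for all $\mathcal{S},\mathcal{S}'\in\mathfrak{M}$, every $T\in P(\mathbb{R}^{S\times K}_{\mathcal{S}})+P(\mathbb{R}^{S\times K}_{\mathcal{S}'})$ (a sum of an element of each set) with $\|\mathcal{A}_{\mathcal{S}\cup\mathcal{S}'}T\|\le\rho$,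 and every $T'\in\ker\mathcal{A}_{\mathcal{S}\cup\mathcal{S}'}$, one has $\|T\|\le\gamma\|T-P_{\mathcal{S}\cup\mathcal{S}'}T'\|$. *)

theory Defs
  imports "HOL-Analysis.Analysis"
begin

text \<open>Matrices of size p x q are functions nat => nat => real, indexed from 0, required to
  vanish outside {0..<p} x {0..<q}.  Vectors in R^S are functions nat => real indexed by
  {1..S} and vanishing outside.  Parameters h are functions nat => nat => real with
  h k i the entry h_{k,i} (k in {1..K}, i in {1..S}), vanishing elsewhere.
  Multi-indices are extensional functions in PiE {1..K} (\<lambda>_. {1..S}); tensors are
  functions on multi-indices vanishing outside this index set.
  Supports are functions nat => nat set (only the components k in {1..K} matter).\<close>

type_synonym matrix = "nat \<Rightarrow> nat \<Rightarrow> real"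
type_synonym tensor = "(nat \<Rightarrow> nat) \<Rightarrow> real"

definition zero_outside :: "nat \<Rightarrow> nat \<Rightarrow> matrix \<Rightarrow> bool" where
  "zero_outside p q X \<longleftrightarrow> (\<forall>a b. \<not> (a < p \<and> b < q) \<longrightarrow> X a b = 0)"

definition mat_mul :: "nat \<Rightarrow> nat \<Rightarrow> nat \<Rightarrow> matrix \<Rightarrow> matrix \<Rightarrow> matrix" where
  "mat_mul p n q X Y = (\<lambda>a b. if a < p \<and> b < q then (\<Sum>c<n. X a c * Y c b) else 0)"

definition id_mat :: "nat \<Rightarrow> matrix" where
  "id_mat p = (\<lambda>a b. if a < p \<and> a = b then 1 else 0)"

definition frob_norm :: "nat \<Rightarrow> nat \<Rightarrow> matrix \<Rightarrow> real" where
  "frob_norm p q X = sqrt (\<Sum>a<p. \<Sum>b<q. (X a b)\<^sup>2)"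

fun chain :: "(nat \<Rightarrow> nat) \<Rightarrow> (nat \<Rightarrow> (nat \<Rightarrow> real) \<Rightarrow> matrix) \<Rightarrow> (nat \<Rightarrow> nat \<Rightarrow> real) \<Rightarrow> nat \<Rightarrow> matrix" where
  "chain m M h 0 = id_mat (m 1)"
| "chain m M h (Suc j) = mat_mul (m 1) (m (Suc j)) (m (Suc (Suc j))) (chain m M h j) (M (Suc j) (h (Suc j)))"

definition vecs :: "nat \<Rightarrow> (nat \<Rightarrow> real) set" where
  "vecs S = {v. \<forall>i. i \<notin> {1..S} \<longrightarrow> v i = 0}"

definition linear_maps :: "nat \<Rightarrow> nat \<Rightarrow> (nat \<Rightarrow> nat) \<Rightarrow> (nat \<Rightarrow> (nat \<Rightarrow> real) \<Rightarrow> matrix) \<Rightarrow> bool" where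
  "linear_maps K S m M \<longleftrightarrow> (\<forall>k\<in>{1..K}.
      (\<forall>v\<in>vecs S. zero_outside (m k) (m (Suc k)) (M k v)) \<and>
      (\<forall>v\<in>vecs S. \<forall>w\<in>vecs S. M k (\<lambda>i. v i + w i) = (\<lambda>a b. M k v a b + M k w a b)) \<and>
      (\<forall>v\<in>vecs S. \<forall>c::real. M k (\<lambda>i. c * v i) = (\<lambda>a b. c * M k v a b)))"

definition params :: "nat \<Rightarrow> nat \<Rightarrow> (nat \<Rightarrow> nat \<Rightarrow> real) set" where
  "params K S = {h. \<forall>k i. \<not> (k \<in> {1..K} \<and> i \<in> {1..S}) \<longrightarrow> h k i = 0}"

definition idx :: "nat \<Rightarrow> nat \<Rightarrow> (nat \<Rightarrow> nat) set" where
  "idx K S = PiE {1..K} (\<lambda>_. {1..S})"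

definition tensors :: "nat \<Rightarrow> nat \<Rightarrow> tensor set" where
  "tensors K S = {T. \<forall>i. i \<notin> idx K S \<longrightarrow> T i = 0}"

definition tnorm :: "nat \<Rightarrow> nat \<Rightarrow> tensor \<Rightarrow> real" where
  "tnorm K S T = sqrt (\<Sum>i\<in>idx K S. (T i)\<^sup>2)"

definition segre :: "nat \<Rightarrow> nat \<Rightarrow> (nat \<Rightarrow> nat \<Rightarrow> real) \<Rightarrow> tensor" where
  "segre K S h = (\<lambda>i. if i \<in> idx K S then (\<Prod>k\<in>{1..K}. h k (i k)) else 0)"

text \<open>The lifting operator: linear on the tensor space, with values m_1 x m_(K+1) matrices,
  and A (P h) = M_1(h_1)...M_K(h_K) for every h (this determines A uniquely).\<close>
definition is_lifting :: "nat \<Rightarrow> nat \<Rightarrow> (nat \<Rightarrow> nat) \<Rightarrow> (nat \<Rightarrow> (nat \<Rightarrow> real) \<Rightarrow> matrix) \<Rightarrow> (tensor \<Rightarrow> matrix) \<Rightarrow> bool" where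
  "is_lifting K S m M A \<longleftrightarrow>
     (\<forall>T\<in>tensors K S. zero_outside (m 1) (m (Suc K)) (A T)) \<and>
     (\<forall>T\<in>tensors K S. \<forall>T'\<in>tensors K S. A (\<lambda>i. T i + T' i) = (\<lambda>a b. A T a b + A T' a b)) \<and>
     (\<forall>T\<in>tensors K S. \<forall>c::real. A (\<lambda>i. c * T i) = (\<lambda>a b. c * A T a b)) \<and>
     (\<forall>h\<in>params K S. A (segre K S h) = chain m M h K)"

definition supp_union :: "(nat \<Rightarrow> nat set) \<Rightarrow> (nat \<Rightarrow> nat set) \<Rightarrow> (nat \<Rightarrow> nat set)" where
  "supp_union Sp Sp' = (\<lambda>k. Sp k \<union> Sp' k)"

definition in_supp :: "nat \<Rightarrow> (nat \<Rightarrow> nat set) \<Rightarrow> (nat \<Rightarrow> nat) \<Rightarrow> bool" where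
  "in_supp K Sp i \<longleftrightarrow> (\<forall>k\<in>{1..K}. i k \<in> Sp k)"

definition params_supp :: "nat \<Rightarrow> nat \<Rightarrow> (nat \<Rightarrow> nat set) \<Rightarrow> (nat \<Rightarrow> nat \<Rightarrow> real) set" where
  "params_supp K S Sp = {h \<in> params K S. \<forall>k\<in>{1..K}. \<forall>i. i \<notin> Sp k \<longrightarrow> h k i = 0}"

definition tensors_supp :: "nat \<Rightarrow> nat \<Rightarrow> (nat \<Rightarrow> nat set) \<Rightarrow> tensor set" where
  "tensors_supp K S Sp = {T \<in> tensors K S. \<forall>i. \<not> in_supp K Sp i \<longrightarrow> T i = 0}"

definition proj :: "nat \<Rightarrow> nat \<Rightarrow> (nat \<Rightarrow> nat set) \<Rightarrow> tensor \<Rightarrow> tensor" where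
  "proj K S Sp T = (\<lambda>i. if i \<in> idx K S \<and> in_supp K Sp i then T i else 0)"

definition lift_restr :: "nat \<Rightarrow> nat \<Rightarrow> (tensor \<Rightarrow> matrix) \<Rightarrow> (nat \<Rightarrow> nat set) \<Rightarrow> tensor \<Rightarrow> matrix" where
  "lift_restr K S A Sp T = A (proj K S Sp T)"

definition kernel :: "nat \<Rightarrow> nat \<Rightarrow> (tensor \<Rightarrow> matrix) \<Rightarrow> tensor set" where
  "kernel K S B = {T \<in> tensors K S. B T = (\<lambda>a b. 0)}"

definition deep_nsp :: "nat \<Rightarrow> nat \<Rightarrow> (nat \<Rightarrow> nat) \<Rightarrow> (tensor \<Rightarrow> matrix) \<Rightarrow> (nat \<Rightarrow> nat set) set \<Rightarrow> real \<Rightarrow> ereal \<Rightarrow> bool" where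
  "deep_nsp K S m A Mf \<gamma> \<rho> \<longleftrightarrow> \<gamma> \<ge> 1 \<and> \<rho> > 0 \<and>
     (\<forall>Sp\<in>Mf. \<forall>Sp'\<in>Mf. \<forall>T T'.
        (\<exists>h\<in>params_supp K S Sp. \<exists>h'\<in>params_supp K S Sp'.
            T = (\<lambda>i. segre K S h i + segre K S h' i)) \<longrightarrow>
        ereal (frob_norm (m 1) (m (Suc K)) (lift_restr K S A (supp_union Sp Sp') T)) \<le> \<rho> \<longrightarrow>
        T' \<in> kernel K S (lift_restr K S A (supp_union Sp Sp')) \<longrightarrow>
        tnorm K S T \<le> \<gamma> * tnorm K S (\<lambda>i. T i - proj K S (supp_union Sp Sp') T' i))"

end

theory Submission
  imports Defs
begin

text \<open>The projection \<open>P\<^sub>\<S> T'\<close> of any \<open>T' \<in> ker \<A>\<^sub>\<S>\<close> lies in \<open>\<T>\<^sub>\<S> \<inter> ker \<A>\<close>; when this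
  intersection is trivial the null space inequality degenerates to \<open>\<parallel>T\<parallel> \<le> \<parallel>T\<parallel>\<close>, for every
  \<open>T\<close> regardless of its norm under \<open>\<A>\<^sub>\<S>\<close>.\<close>

lemma proj_in_tensors_supp: "proj K S Sp T \<in> tensors_supp K S Sp"
  unfolding tensors_supp_def tensors_def proj_def by auto

lemma lifting_proj_of_kernel_lift_restr:
  assumes "T' \<in> kernel K S (lift_restr K S A Sp)"
  shows "A (proj K S Sp T') = (\<lambda>a b. 0)"
  using assms unfolding kernel_def lift_restr_def by simp

lemma proj_of_kernel_lift_restr_eq_0:
  assumes injective: "\<forall>T\<in>tensors_supp K S Sp. A T = (\<lambda>a b. 0) \<longrightarrow> T = (\<lambda>i. 0)"
    and "T' \<in> kernel K S (lift_restr K S A Sp)"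
  shows "proj K S Sp T' = (\<lambda>i. 0)"
  using injective proj_in_tensors_supp lifting_proj_of_kernel_lift_restr[OF assms(2)] by blast

lemma deep_nsp_1_infinity_if_proj_kernel_trivial:
  assumes "\<And>Sp Sp' T'. Sp \<in> Mf \<Longrightarrow> Sp' \<in> Mf \<Longrightarrow>
      T' \<in> kernel K S (lift_restr K S A (supp_union Sp Sp')) \<Longrightarrow>
      proj K S (supp_union Sp Sp') T' = (\<lambda>i. 0)"
  shows "deep_nsp K S m A Mf 1 \<infinity>"
  unfolding deep_nsp_def using assms by auto

theorem proposition1:
  fixes K S :: nat and m :: "nat \<Rightarrow> nat"
    and M :: "nat \<Rightarrow> (nat \<Rightarrow> real) \<Rightarrow> matrix"
    and A :: "tensor \<Rightarrow> matrix"
    and Mf :: "(nat \<Rightarrow> nat set) set"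
  assumes "K \<ge> 1" and "S \<ge> 1"
    and "\<forall>k\<in>{1..Suc K}. m k > 0"
    and "linear_maps K S m M"
    and "is_lifting K S m M A"
    and "finite Mf"
    and "\<forall>Sp\<in>Mf. \<forall>k\<in>{1..K}. Sp k \<subseteq> {1..S}"
    and "\<forall>Sp\<in>Mf. \<forall>Sp'\<in>Mf. \<forall>T\<in>tensors_supp K S (supp_union Sp Sp').
           A T = (\<lambda>a b. 0) \<longrightarrow> T = (\<lambda>i. 0)"
  shows "deep_nsp K S m A Mf 1 \<infinity>"
proof (rule deep_nsp_1_infinity_if_proj_kernel_trivial)
  fix Sp Sp' T'
  assume "Sp \<in> Mf" "Sp' \<in> Mf" and kernel: "T' \<in> kernel K S (lift_restr K S A (supp_union Sp Sp'))"
  then have "\<forall>T\<in>tensors_supp K S (supp_union Sp Sp'). A T = (\<lambda>a b. 0) \<longrightarrow> T = (\<lambda>i. 0)"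
    using assms(8) by blast
  then show "proj K S (supp_union Sp Sp') T' = (\<lambda>i. 0)"
    using kernel by (rule proj_of_kernel_lift_restr_eq_0)
qed

end
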